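(* Let $a_1,\dots,a_n$ be positive integers and $K=R(a_1,\dots,a_n)$ a 2-bridge link. If $K$ is not $R(1,1,1,1)$, $R(1,a_2,1)$ (for any $a_2\ge1$), $R(1,1)$ or $R(1)$, then $$\det(R(a_1,\dots,a_n))\ge V(a_1,\dots,a_n).$$
   Context: For positive integers $b_1,\dots,b_r$, $R(b_1,\dots,b_r)$ denotes the 2-bridge link given by the standard alternating 2-bridge diagram with $r$ twist regions in a row, the $i$-th containing $b_i$ half-twists; $\det$ denotes $|\Delta(-1)|$ for the Alexander polynomial $\Delta$ (equivalently $\det R(b_1,\dots,b_r)=S(r)$ with $S(0)=1$, $S(1)=b_1$, $S(i+1)=b_{i+1}S(i)+S(i-1)$). $V(a_1,\dots,a_n)=\prod_{i=1}^n\frac{a_i+2}{2}$. *)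

theory Defs
  imports Complex_Main
begin

text \<open>For a list bs = [b_1,...,b_r] (0-indexed in Isabelle: b_i = bs!(i-1)):
  S(0)=1, S(1)=b_1, S(i+1) = b_{i+1} S(i) + S(i-1).\<close>

fun twobridge_S :: "nat list \<Rightarrow> nat \<Rightarrow> nat" where
  "twobridge_S bs 0 = 1"
| "twobridge_S bs (Suc 0) = bs ! 0"
| "twobridge_S bs (Suc (Suc i)) = bs ! (Suc i) * twobridge_S bs (Suc i) + twobridge_S bs i"

definition det_R :: "nat list \<Rightarrow> nat" where
  "det_R bs = twobridge_S bs (length bs)"

definition V :: "nat list \<Rightarrow> real" where
  "V as = (\<Prod>i<length as. (real (as ! i) + 2) / 2)"

end

theory Submission
  imports Defs
begin

text \<open>Writing K = det R(a_1,...,a_k) and P = det R(a_1,...,a_(k-1)), appending a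
  twist region a multiplies V by (a+2)/2 and sends (K, P) to (aK + P, K).
  The pair of inequalities K \<ge> V and 2(K + P) \<ge> 3V is preserved by this step for
  every a \<ge> 1: the first because aK + P \<ge> (a-1)V + 3V/2 \<ge> V(a+2)/2, the second because
  2((a+1)K + P) \<ge> 2aV + 3V \<ge> 3V(a+2)/2.  A short case analysis shows that every
  positive word other than the excluded ones, and R(1,b) with b \<ge> 2 (checked
  directly), starts with a prefix satisfying both inequalities.\<close>

lemma twobridge_S_append:
  "i \<le> length xs \<Longrightarrow> twobridge_S (xs @ ys) i = twobridge_S xs i"
  by (induction xs i rule: twobridge_S.induct) (auto simp: nth_append)

lemma det_R_snoc:
  assumes "xs \<noteq> []"
  shows "det_R (xs @ [a]) = a * det_R xs + det_R (butlast xs)"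
proof -
  obtain m where m: "length xs = Suc m" using assms by (cases xs) auto
  have "twobridge_S (butlast xs) m = twobridge_S xs m"
    using twobridge_S_append[of m "butlast xs" "[last xs]"] assms m
    by (simp add: snoc_eq_iff_butlast)
  then show ?thesis
    using m by (simp add: det_R_def twobridge_S_append nth_append)
qed

lemma V_Nil [simp]: "V [] = 1"
  by (simp add: V_def)

lemma V_Cons [simp]: "V (a # xs) = (real a + 2) / 2 * V xs"
  unfolding V_def length_Cons prod.lessThan_Suc_shift by simp

lemma V_append: "V (xs @ ys) = V xs * V ys"
  by (induction xs) simp_all

lemma V_nonneg: "V xs \<ge> 0"
  by (induction xs) simp_all

text \<open>The second determinant stands for P = det R(a_1,...,a_(k-1)); since butlast [] = [],
  the empty word has to be excluded explicitly (det_R_snoc fails for it).\<close>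

definition strong_det_bound :: "nat list \<Rightarrow> bool" where
  "strong_det_bound xs \<longleftrightarrow> xs \<noteq> [] \<and> real (det_R xs) \<ge> V xs \<and>
     2 * (real (det_R xs) + real (det_R (butlast xs))) \<ge> 3 * V xs"

lemma strong_det_bound_snoc:
  assumes bound: "strong_det_bound xs" and "a > 0"
  shows "strong_det_bound (xs @ [a])"
proof -
  define K P W where "K = real (det_R xs)" and "P = real (det_R (butlast xs))"
    and "W = V xs"
  have KW: "K \<ge> W" and KPW: "2 * (K + P) \<ge> 3 * W" and "xs \<noteq> []"
    using bound by (auto simp: strong_det_bound_def K_def P_def W_def)
  have a: "real a \<ge> 1" using \<open>a > 0\<close> by simp
  have W: "W \<ge> 0" by (simp add: W_def V_nonneg)
  have aW: "W \<le> real a * W" using mult_right_mono[OF a W] by simp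
  have aK: "real a * W \<le> real a * K" using KW a by (simp add: mult_left_mono)
  have "0 \<le> (real a - 1) * (K - W)" using KW a by simp
  then have "real a * W - W \<le> real a * K - K" by (simp add: algebra_simps)
  then have det: "W * ((real a + 2) / 2) \<le> real a * K + P"
    using KPW aW by (simp add: field_simps)
  have sum: "3 * (W * ((real a + 2) / 2)) \<le> 2 * (real a * K + P + K)"
    using KPW aK aW W by (simp add: field_simps)
  show ?thesis
    using det sum \<open>xs \<noteq> []\<close>
    by (simp add: strong_det_bound_def det_R_snoc V_append K_def P_def W_def)
qed

lemma strong_det_bound_append:
  "strong_det_bound xs \<Longrightarrow> \<forall>a\<in>set ys. a > 0 \<Longrightarrow> strong_det_bound (xs @ ys)"
proof (induction ys arbitrary: xs)
  case (Cons a ys)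
  then show ?case
    using strong_det_bound_snoc[of xs a] Cons.IH[of "xs @ [a]"] by simp
qed simp

lemma strong_det_bound_single: "a \<ge> 2 \<Longrightarrow> strong_det_bound [a]"
  by (simp add: strong_det_bound_def det_R_def)

lemma strong_det_bound_1bc:
  assumes "b \<ge> 1" "c \<ge> 2"
  shows "strong_det_bound [1, b, c]"
proof -
  obtain x y where "b = x + 1" "c = y + 2"
    using assms by (metis add.commute le_Suc_ex one_add_one plus_1_eq_Suc)
  then show ?thesis
    using mult_nonneg_nonneg[of "real x" "real y"]
    by (simp add: strong_det_bound_def det_R_def numeral_eq_Suc field_simps)
qed

lemma strong_det_bound_1b1d:
  assumes "b \<ge> 1" "d \<ge> 1" "b + d \<ge> 3"
  shows "strong_det_bound [1, b, 1, d]"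
proof -
  obtain x y where xy: "b = x + 1" "d = y + 1"
    using assms by (metis add.commute le_Suc_ex plus_1_eq_Suc)
  moreover have "1 \<le> real x + real y" using xy assms by simp
  ultimately show ?thesis
    by (simp add: strong_det_bound_def det_R_def numeral_eq_Suc field_simps)
      (smt (verit) of_nat_0_le_iff mult_nonneg_nonneg)
qed

lemma strong_det_bound_11111e: "e \<ge> 1 \<Longrightarrow> strong_det_bound [1, 1, 1, 1, e]"
  by (simp add: strong_det_bound_def det_R_def numeral_eq_Suc field_simps)

lemma strong_det_bound_prefix:
  assumes pos: "\<forall>a\<in>set as. a > 0"
    and "as \<noteq> []" "as \<noteq> [1]" "\<forall>b. as \<noteq> [1, b]" "\<forall>b. as \<noteq> [1, b, 1]"
    and "as \<noteq> [1, 1, 1, 1]"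
  obtains xs ys where "as = xs @ ys" "strong_det_bound xs"
proof -
  have one: "a \<in> set as \<Longrightarrow> \<not> 2 \<le> a \<Longrightarrow> a = 1" for a using pos by force
  obtain a r where as: "as = a # r" using \<open>as \<noteq> []\<close> by (cases as) auto
  show thesis
  proof (cases "a \<ge> 2")
    case True
    then show thesis using as that[of "[a]"] strong_det_bound_single by simp
  next
    case False
    then have "a = 1" using one as by simp
    obtain b c r2 where r: "r = b # c # r2"
      using assms as \<open>a = 1\<close> by (cases r rule: remdups_adj.cases) auto
    have "b \<ge> 1" using pos as r by simp
    show thesis
    proof (cases "c \<ge> 2")
      case True
      then show thesis
        using as \<open>a = 1\<close> r \<open>b \<ge> 1\<close> that[of "[1, b, c]"] strong_det_bound_1bc by simp
    next
      case False
      then have "c = 1" using one as r by simp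
      obtain d r3 where r2: "r2 = d # r3"
        using assms as \<open>a = 1\<close> r \<open>c = 1\<close> by (cases r2) auto
      have "d \<ge> 1" using pos as r r2 by simp
      show thesis
      proof (cases "b + d \<ge> 3")
        case True
        then show thesis
          using as \<open>a = 1\<close> r \<open>c = 1\<close> r2 \<open>b \<ge> 1\<close> \<open>d \<ge> 1\<close> that[of "[1, b, 1, d]"]
            strong_det_bound_1b1d by simp
      next
        case False
        then have "b = 1" "d = 1" using \<open>b \<ge> 1\<close> \<open>d \<ge> 1\<close> by auto
        then obtain e r4 where "as = [1, 1, 1, 1, e] @ r4" "e \<ge> 1"
          using assms as \<open>a = 1\<close> r \<open>c = 1\<close> r2 by (cases r3) auto
        then show thesis using that strong_det_bound_11111e by blast
      qed
    qed
  qed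
qed

theorem corollary3p6:
  fixes as :: "nat list"
  assumes pos: "\<forall>a\<in>set as. a > 0"
    and n1: "as \<noteq> [1, 1, 1, 1]"
    and n2: "\<forall>a2. as \<noteq> [1, a2, 1]"
    and n3: "as \<noteq> [1, 1]"
    and n4: "as \<noteq> [1]"
  shows "real (det_R as) \<ge> V as"
proof -
  consider "as = []" | b where "as = [1, b]" "b \<ge> 2"
    | xs ys where "as = xs @ ys" "strong_det_bound xs"
  proof (cases "as = [] \<or> (\<exists>b. as = [1, b])")
    case True
    then show thesis using that(1,2) n3 pos by force
  qed (use strong_det_bound_prefix[OF pos _ n4 _ n2 n1] that(3) in blast)
  then show ?thesis
  proof cases
    case 1
    then show ?thesis by (simp add: det_R_def)
  next
    case (2 b)
    then show ?thesis by (simp add: det_R_def numeral_eq_Suc field_simps)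
  next
    case (3 xs ys)
    then have "strong_det_bound as" using strong_det_bound_append pos by simp
    then show ?thesis by (simp add: strong_det_bound_def)
  qed
qed

end
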